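(* Let $P$ be a lattice-face $d$-simplex with vertices $v_1,\dots,v_{d+1}$. For every $\sigma\in\mathfrak S_d$ and every $1\le k\le d$, $z(\sigma,k)/z(\sigma,k-1)\in\mathbb Z$, where $z(\sigma,0)=1$.
   Context: Write $v_i=(x_{i,1},\dots,x_{i,d})$. For $1\le k\le d$, $X(\sigma,k)$ is the $(k+1)\times(k+1)$ matrix with rows $(1,x_{\sigma(r),1},\dots,x_{\sigma(r),k})$, $r=1,\dots,k$, and last row $(1,x_{d+1,1},\dots,x_{d+1,k})$; $Y(\sigma,k)$ is the $k\times k$ matrix with rows $(1,x_{\sigma(r),1},\dots,x_{\sigma(r),k-1})$, $r=1,\dots,k$; $z(\sigma,k)=\det X(\sigma,k)/\det Y(\sigma,k)$ (these determinants are nonzero for lattice-face simplices). Lattice-face polytopes are defined recursively, with $\pi:\mathbb R^d\to\mathbb R^{d-1}$ forgetting the last coordinate: a segment in $\mathbb R$ is lattice-face if its endpoints are integers; for $d\ge2$, a $d$-polytope with vertex set $V$ is lattice-face if for every $d$-element $U\subset V$: (a) $\pi(\mathrm{conv}(U))$ is a lattice-face polytope in $\mathbb R^{d-1}$, and (b) $\pi(H_U\cap\mathbb Z^d)=\mathbb Z^{d-1}$, $H_U$ the affine span of $U$. *)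

theory Defs
  imports "HOL-Analysis.Analysis"
begin

text \<open>Points of R^d are represented as functions nat \<Rightarrow> real whose coordinates
  1..d are the actual coordinates and all other coordinates are 0.\<close>

definition Rd :: "nat \<Rightarrow> (nat \<Rightarrow> real) set" where
  "Rd d = {p. \<forall>j. j \<notin> {1..d} \<longrightarrow> p j = 0}"

definition Zd :: "nat \<Rightarrow> (nat \<Rightarrow> real) set" where
  "Zd d = {p \<in> Rd d. \<forall>j\<in>{1..d}. p j \<in> \<int>}"

definition proj :: "nat \<Rightarrow> (nat \<Rightarrow> real) \<Rightarrow> (nat \<Rightarrow> real)" where
  "proj d p = p(d := 0)"

definition conv_hull :: "(nat \<Rightarrow> real) set \<Rightarrow> (nat \<Rightarrow> real) set" where
  "conv_hull S = {y. \<exists>F c. finite F \<and> F \<subseteq> S \<and> F \<noteq> {} \<and> (\<forall>x\<in>F. 0 \<le> c x)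
       \<and> sum c F = 1 \<and> y = (\<lambda>j. \<Sum>x\<in>F. c x * x j)}"

definition aff_hull :: "(nat \<Rightarrow> real) set \<Rightarrow> (nat \<Rightarrow> real) set" where
  "aff_hull S = {y. \<exists>F c. finite F \<and> F \<subseteq> S \<and> F \<noteq> {}
       \<and> sum c F = 1 \<and> y = (\<lambda>j. \<Sum>x\<in>F. c x * x j)}"

definition vertices_of :: "(nat \<Rightarrow> real) set \<Rightarrow> (nat \<Rightarrow> real) set" where
  "vertices_of S = {x \<in> S. x \<notin> conv_hull (S - {x})}"

definition polytope_vertices :: "nat \<Rightarrow> (nat \<Rightarrow> real) set \<Rightarrow> bool" where
  "polytope_vertices d V \<longleftrightarrow> finite V \<and> V \<subseteq> Rd d \<and> vertices_of V = V \<and> aff_hull V = Rd d"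

fun lattice_face :: "nat \<Rightarrow> (nat \<Rightarrow> real) set \<Rightarrow> bool" where
  "lattice_face 0 V = False"
| "lattice_face (Suc 0) V = (polytope_vertices 1 V \<and> (\<forall>v\<in>V. v 1 \<in> \<int>))"
| "lattice_face (Suc (Suc n)) V =
     (polytope_vertices (Suc (Suc n)) V \<and>
      (\<forall>U. U \<subseteq> V \<and> card U = Suc (Suc n) \<longrightarrow>
         lattice_face (Suc n) (vertices_of (proj (Suc (Suc n)) ` U)) \<and>
         proj (Suc (Suc n)) ` (aff_hull U \<inter> Zd (Suc (Suc n))) = Zd (Suc n)))"

definition detn :: "nat \<Rightarrow> (nat \<Rightarrow> nat \<Rightarrow> real) \<Rightarrow> real" where
  "detn n A = (\<Sum>p | p permutes {..<n}. of_int (sign p) * (\<Prod>i<n. A i (p i)))"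

text \<open>X(sigma,k): (k+1)x(k+1); rows r = 0..k-1 are (1, x_{sigma(r+1),1..k}),
  last row (r = k) is (1, x_{d+1,1..k}).  v i j = x_{i,j}.\<close>
definition Xmat :: "(nat \<Rightarrow> nat \<Rightarrow> real) \<Rightarrow> nat \<Rightarrow> (nat \<Rightarrow> nat) \<Rightarrow> nat \<Rightarrow> nat \<Rightarrow> nat \<Rightarrow> real" where
  "Xmat v d \<sigma> k r c = (if c = 0 then 1 else (if r < k then v (\<sigma> (r + 1)) c else v (d + 1) c))"

text \<open>Y(sigma,k): k x k; rows r = 0..k-1 are (1, x_{sigma(r+1),1..k-1}).\<close>
definition Ymat :: "(nat \<Rightarrow> nat \<Rightarrow> real) \<Rightarrow> (nat \<Rightarrow> nat) \<Rightarrow> nat \<Rightarrow> nat \<Rightarrow> nat \<Rightarrow> real" where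
  "Ymat v \<sigma> k r c = (if c = 0 then 1 else v (\<sigma> (r + 1)) c)"

definition zval :: "(nat \<Rightarrow> nat \<Rightarrow> real) \<Rightarrow> nat \<Rightarrow> (nat \<Rightarrow> nat) \<Rightarrow> nat \<Rightarrow> real" where
  "zval v d \<sigma> k = (if k = 0 then 1 else detn (k + 1) (Xmat v d \<sigma> k) / detn k (Ymat v \<sigma> k))"

end

theory Submission
  imports Defs "Jordan_Normal_Form.Determinant"
begin

text \<open>On any \<open>m\<close> vertices of a lattice-face \<open>d\<close>-polytope, coordinate \<open>m\<close> is an affine function
  of coordinates \<open>1, \<dots>, m - 1\<close> with integer coefficients.  Let \<open>A\<close> and \<open>B\<close> be these functions
  for the vertices \<open>v_\<sigma>(1), \<dots>, v_\<sigma>(k)\<close> and \<open>v_\<sigma>(1), \<dots>, v_\<sigma>(k-1), v_(d+1)\<close>.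
  Eliminating the last column of \<open>X(\<sigma>, k)\<close> with \<open>A\<close> gives
  \<open>z(\<sigma>, k) = x_(d+1),k - A(v_(d+1)) = (B - A)(v_(d+1))\<close>.  As \<open>B - A\<close> vanishes at the
  \<open>k - 1\<close> affinely independent points \<open>v_\<sigma>(1), \<dots>, v_\<sigma>(k-1)\<close>, it is the integer
  \<open>b_(k-1) - a_(k-1)\<close> times the affine function that yields \<open>z(\<sigma>, k - 1)\<close> in the same way.\<close>

section \<open>Determinants\<close>

lemma detn_eq_det: "detn n A = Determinant.det (mat n n (\<lambda>(i, j). A i j))"
  unfolding detn_def det_def by (auto simp: atLeast0LessThan intro!: sum.cong prod.cong)

lemma detn_0 [simp]: "detn 0 A = 1"
  by (simp add: detn_def)

lemma detn_cong: "(\<And>i j. i < n \<Longrightarrow> j < n \<Longrightarrow> A i j = B i j) \<Longrightarrow> detn n A = detn n B"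
  unfolding detn_def by (auto intro!: sum.cong prod.cong simp: permutes_def)

lemma detn_eq_0_iff:
  "detn n A = 0 \<longleftrightarrow> (\<exists>c. (\<forall>r<n. (\<Sum>j<n. A r j * c j) = 0) \<and> (\<exists>j<n. c j \<noteq> 0))"
proof -
  let ?M = "mat n n (\<lambda>(i, j). A i j)"
  have kernel: "?M *\<^sub>v vec n c = 0\<^sub>v n \<longleftrightarrow> (\<forall>r<n. (\<Sum>j<n. A r j * c j) = 0)" for c
    by (auto simp: vec_eq_iff scalar_prod_def atLeast0LessThan)
  have nonzero: "vec n c \<noteq> 0\<^sub>v n \<longleftrightarrow> (\<exists>j<n. c j \<noteq> 0)" for c :: "nat \<Rightarrow> real"
    by (auto simp: vec_eq_iff)
  have "detn n A = 0 \<longleftrightarrow> (\<exists>x. x \<in> carrier_vec n \<and> x \<noteq> 0\<^sub>v n \<and> ?M *\<^sub>v x = 0\<^sub>v n)"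
    using det_0_iff_vec_prod_zero[of ?M n] by (simp only: detn_eq_det mat_carrier)
  also have "\<dots> \<longleftrightarrow> (\<exists>c. ?M *\<^sub>v vec n c = 0\<^sub>v n \<and> vec n c \<noteq> 0\<^sub>v n)"
  proof
    assume "\<exists>x. x \<in> carrier_vec n \<and> x \<noteq> 0\<^sub>v n \<and> ?M *\<^sub>v x = 0\<^sub>v n"
    then obtain x where "x \<in> carrier_vec n" "x \<noteq> 0\<^sub>v n" "?M *\<^sub>v x = 0\<^sub>v n" by blast
    moreover from \<open>x \<in> carrier_vec n\<close> have "vec n (vec_index x) = x" by auto
    ultimately show "\<exists>c. ?M *\<^sub>v vec n c = 0\<^sub>v n \<and> vec n c \<noteq> 0\<^sub>v n" by metis
  qed (use vec_carrier in blast)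
  finally show ?thesis by (simp add: kernel nonzero)
qed

lemma detn_solvable:
  assumes "detn n A \<noteq> 0"
  obtains c where "\<And>r. r < n \<Longrightarrow> (\<Sum>j<n. A r j * c j) = b r"
proof -
  let ?M = "mat n n (\<lambda>(i, j). A i j)"
  have M: "?M \<in> carrier_mat n n" by simp
  have "Determinant.det ?M \<noteq> 0" using assms by (simp add: detn_eq_det)
  from det_non_zero_imp_unit[OF M this, of undefined]
  obtain B where B: "B \<in> carrier_mat n n" "?M * B = 1\<^sub>m n"
    by (auto simp: Units_def ring_mat_def)
  define c where "c = B *\<^sub>v vec n b"
  have "?M *\<^sub>v c = vec n b"
    using B by (simp add: c_def assoc_mult_mat_vec[symmetric, of _ n n _ n])
  moreover have "dim_vec c = n" using B by (simp add: c_def)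
  ultimately show ?thesis
    by (intro that[of "vec_index c"])
      (auto simp: vec_eq_iff mult_mat_vec_def scalar_prod_def atLeast0LessThan)
qed

lemma detn_Suc_eliminate_last_column:
  assumes "\<And>r. r < n \<Longrightarrow> A r n = (\<Sum>j<n. a j * A r j)"
  shows "detn (Suc n) A = (A n n - (\<Sum>j<n. a j * A n j)) * detn n A"
proof -
  define M where "M = mat (Suc n) (Suc n) (\<lambda>(i, j). A i j)"
  define E :: "real mat"
    where "E = mat (Suc n) (Suc n) (\<lambda>(i, j). if i = j then 1 else if j = n then - a i else 0)"
  define B where "B = M * E"
  have M: "M \<in> carrier_mat (Suc n) (Suc n)" and E: "E \<in> carrier_mat (Suc n) (Suc n)"
    and B: "B \<in> carrier_mat (Suc n) (Suc n)"
    by (auto simp: M_def E_def B_def)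
  have "Determinant.det E = prod_list (diag_mat E)"
    by (rule det_upper_triangular[OF _ E]) (auto simp: upper_triangular_def E_def)
  also have "\<dots> = 1"
    by (auto simp: prod_list_diag_prod E_def intro!: prod.neutral)
  finally have "Determinant.det B = detn (Suc n) A"
    using det_mult[OF M E] by (simp add: B_def M_def detn_eq_det)
  have B_entry: "B $$ (r, c) = (if c = n then A r n - (\<Sum>j<n. a j * A r j) else A r c)"
    if "r < Suc n" "c < Suc n" for r c
  proof -
    have "B $$ (r, c) = (\<Sum>i<Suc n. A r i * E $$ (i, c))"
      using that by (simp add: B_def M_def E_def scalar_prod_def atLeast0LessThan)
    also have "\<dots> = (\<Sum>i<Suc n. if i = c then A r c else if c = n then - (a i * A r i) else 0)"
      using that by (intro sum.cong) (auto simp: E_def)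
    finally show ?thesis
      using that by (auto simp: sum_negf sum.If_cases Int_absorb2)
  qed
  have "Determinant.det B = (\<Sum>i<Suc n. B $$ (i, n) * cofactor B i n)"
    using laplace_expansion_column[OF B] by simp
  also have "\<dots> = B $$ (n, n) * Determinant.det (mat_delete B n n)"
    using assms by (simp add: B_entry cofactor_def)
  also have "mat_delete B n n = mat n n (\<lambda>(i, j). A i j)"
    using B by (intro eq_matI) (auto simp: mat_delete_def B_entry)
  finally show ?thesis
    using \<open>Determinant.det B = detn (Suc n) A\<close> by (simp add: B_entry detn_eq_det)
qed

section \<open>Affine functions in homogeneous coordinates\<close>

text \<open>Coordinate 0, unused by points of \<open>Rd d\<close>, is set to 1, so that \<open>affine_form m a x\<close> is
  \<open>a 0 + a 1 * x 1 + \<dots> + a (m - 1) * x (m - 1)\<close>.\<close>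

definition homog :: "(nat \<Rightarrow> real) \<Rightarrow> nat \<Rightarrow> real" where
  "homog x j = (if j = 0 then 1 else x j)"

definition affine_form :: "nat \<Rightarrow> (nat \<Rightarrow> real) \<Rightarrow> (nat \<Rightarrow> real) \<Rightarrow> real" where
  "affine_form m a x = (\<Sum>j<m. a j * homog x j)"

lemma sum_homog_mult_eq_affine_form: "(\<Sum>j<m. homog x j * a j) = affine_form m a x"
  by (simp add: affine_form_def mult.commute)

lemma affine_form_Suc: "affine_form (Suc m) a x = affine_form m a x + a m * homog x m"
  by (simp add: affine_form_def)

lemma affine_form_add: "affine_form m (\<lambda>j. a j + b j) x = affine_form m a x + affine_form m b x"
  by (simp add: affine_form_def distrib_right sum.distrib)

lemma affine_form_diff: "affine_form m (\<lambda>j. a j - b j) x = affine_form m a x - affine_form m b x"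
  by (simp add: affine_form_def left_diff_distrib sum_subtractf)

lemma affine_form_scale: "affine_form m (\<lambda>j. c * a j) x = c * affine_form m a x"
  by (simp add: affine_form_def sum_distrib_left mult.assoc)

lemma homog_proj: "j < N \<Longrightarrow> homog (proj N x) j = homog x j"
  by (simp add: homog_def proj_def)

lemma affine_form_proj: "m \<le> N \<Longrightarrow> affine_form m a (proj N x) = affine_form m a x"
  by (simp add: affine_form_def homog_proj)

lemma affine_form_origin: "affine_form (Suc n) a (\<lambda>_. 0) = a 0"
  by (induction n) (auto simp: affine_form_def homog_def)

lemma affine_form_indicator:
  assumes "j \<in> {1..n}"
  shows "affine_form (Suc n) a (indicator {j}) = a 0 + a j"
proof -
  have "{..<Suc n} = insert 0 {1..n}" by auto
  then have "affine_form (Suc n) a (indicator {j}) = a 0 + (\<Sum>i\<in>{1..n}. a i * indicator {j} i)"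
    by (simp add: affine_form_def homog_def)
  then show ?thesis
    using assms by (simp add: indicator_def)
qed

lemma origin_Zd: "(\<lambda>_. 0) \<in> Zd n"
  by (simp add: Zd_def Rd_def)

lemma indicator_Zd: "j \<in> {1..n} \<Longrightarrow> indicator {j} \<in> Zd n"
  by (auto simp: Zd_def Rd_def indicator_def)

lemma affine_form_Ints_on_Zd_imp_coeff:
  assumes "\<And>z. z \<in> Zd n \<Longrightarrow> affine_form (Suc n) a z \<in> \<int>" "j \<le> n"
  shows "a j \<in> \<int>"
proof (cases "j = 0")
  case True
  then show ?thesis using assms(1)[OF origin_Zd] by (simp add: affine_form_origin)
next
  case False
  then have "j \<in> {1..n}" using assms(2) by simp
  then have "(a 0 + a j) - a 0 \<in> \<int>"
    using assms(1)[OF indicator_Zd] assms(1)[OF origin_Zd]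
    by (metis Ints_diff affine_form_indicator affine_form_origin)
  then show ?thesis by simp
qed

lemma affine_form_zero_on_Zd_imp_coeff:
  assumes "\<And>z. z \<in> Zd n \<Longrightarrow> affine_form (Suc n) a z = 0" "j \<le> n"
  shows "a j = 0"
proof (cases "j = 0")
  case True
  then show ?thesis using assms(1)[OF origin_Zd] by (simp add: affine_form_origin)
next
  case False
  then have "j \<in> {1..n}" using assms(2) by simp
  then show ?thesis
    using assms(1)[OF indicator_Zd] assms(1)[OF origin_Zd]
    by (simp add: affine_form_indicator affine_form_origin)
qed

lemma homog_aff_hull:
  assumes "y \<in> aff_hull S"
  obtains F c where "finite F" "F \<subseteq> S" "sum c F = 1" "\<And>j. homog y j = (\<Sum>x\<in>F. c x * homog x j)"
proof -
  from assms obtain F c where "finite F" "F \<subseteq> S" "sum c F = 1" "y = (\<lambda>j. \<Sum>x\<in>F. c x * x j)"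
    unfolding aff_hull_def by blast
  then show ?thesis
    by (intro that[of F c]) (auto simp: homog_def)
qed

lemma affine_form_aff_hull:
  assumes "\<And>x. x \<in> S \<Longrightarrow> affine_form m a x = t" "y \<in> aff_hull S"
  shows "affine_form m a y = t"
proof -
  obtain F c where F: "finite F" "F \<subseteq> S" "sum c F = 1"
    and y: "\<And>j. homog y j = (\<Sum>x\<in>F. c x * homog x j)"
    using homog_aff_hull[OF assms(2)] by blast
  have "affine_form m a y = (\<Sum>x\<in>F. c x * affine_form m a x)"
    unfolding affine_form_def y sum_distrib_left
    by (subst sum.swap) (simp add: mult.left_commute)
  also have "\<dots> = (\<Sum>x\<in>F. c x * t)"
    using F assms(1) by (intro sum.cong) auto
  finally show ?thesis
    using F by (simp add: sum_distrib_right[symmetric])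
qed

lemma affine_relation_aff_hull:
  assumes "\<And>x. x \<in> S \<Longrightarrow> homog x m = affine_form m a x" "y \<in> aff_hull S"
  shows "homog y m = affine_form m a y"
proof -
  have "affine_form (Suc m) (a(m := -1)) x = affine_form m a x - homog x m" for x
    by (simp add: affine_form_Suc affine_form_def)
  then show ?thesis
    using affine_form_aff_hull[of S "Suc m" "a(m := -1)" 0 y] assms by simp
qed

lemma conv_hull_subset_aff_hull: "conv_hull S \<subseteq> aff_hull S"
  unfolding conv_hull_def aff_hull_def by blast

lemma aff_hull_mono: "S \<subseteq> T \<Longrightarrow> aff_hull S \<subseteq> aff_hull T"
  unfolding aff_hull_def by blast

section \<open>Lattice-face polytopes\<close>

lemma lattice_face_polytope: "lattice_face n V \<Longrightarrow> polytope_vertices n V"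
  by (induction n V rule: lattice_face.induct) simp_all

lemma affine_interpolation:
  assumes "card U = Suc n" "Rd n \<subseteq> aff_hull (proj (Suc n) ` U)"
  obtains a where "\<And>u. u \<in> U \<Longrightarrow> affine_form (Suc n) a u = t u"
proof -
  have "finite U"
    using card_ge_0_finite[of U] assms(1) by simp
  then obtain e where "bij_betw e {0..<card U} U"
    using ex_bij_betw_nat_finite by blast
  then have e: "bij_betw e {..<Suc n} U"
    by (simp add: assms(1) atLeast0LessThan)
  have e_onto: "\<exists>r<Suc n. u = e r" if "u \<in> U" for u
    using bij_betw_imp_surj_on[OF e] that by (metis imageE lessThan_iff)
  define L where "L r = homog (e r)" for r
  have nonsingular: "detn (Suc n) L \<noteq> 0"
  proof
    assume "detn (Suc n) L = 0"
    then obtain c j where c: "\<And>r. r < Suc n \<Longrightarrow> (\<Sum>j<Suc n. L r j * c j) = 0"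
      and "j < Suc n" "c j \<noteq> 0"
      unfolding detn_eq_0_iff by blast
    have "affine_form (Suc n) c u = 0" if u: "u \<in> U" for u
    proof -
      obtain r where "r < Suc n" "u = e r"
        using e_onto[OF u] by blast
      then show ?thesis
        using c by (simp add: L_def sum_homog_mult_eq_affine_form)
    qed
    then have "affine_form (Suc n) c x = 0" if "x \<in> proj (Suc n) ` U" for x
      using that by (auto simp: affine_form_proj)
    then have "affine_form (Suc n) c z = 0" if "z \<in> Zd n" for z
      using affine_form_aff_hull[of "proj (Suc n) ` U" "Suc n" c 0 z] assms(2) that
      by (auto simp: Zd_def)
    then have "c j = 0"
      using affine_form_zero_on_Zd_imp_coeff \<open>j < Suc n\<close> less_Suc_eq_le by blast
    with \<open>c j \<noteq> 0\<close> show False ..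
  qed
  obtain a where a: "\<And>r. r < Suc n \<Longrightarrow> (\<Sum>j<Suc n. L r j * a j) = t (e r)"
    using detn_solvable[OF nonsingular, of "\<lambda>r. t (e r)"] by blast
  show ?thesis
  proof (rule that)
    fix u assume "u \<in> U"
    then obtain r where "r < Suc n" "u = e r"
      using e_onto by blast
    then show "affine_form (Suc n) a u = t u"
      using a by (simp add: L_def sum_homog_mult_eq_affine_form)
  qed
qed

lemma proj_inj_on_and_vertices:
  assumes "card U = Suc n" "Rd n \<subseteq> aff_hull (proj (Suc n) ` U)"
  shows "inj_on (proj (Suc n)) U" "vertices_of (proj (Suc n) ` U) = proj (Suc n) ` U"
proof -
  let ?P = "proj (Suc n)"
  have separate: "\<exists>a. \<forall>u\<in>U. affine_form (Suc n) a (?P u) = (if u = u0 then 1 else 0)" for u0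
    using affine_interpolation[OF assms, of "\<lambda>u. if u = u0 then 1 else 0"]
    by (metis affine_form_proj order_refl)
  show "inj_on ?P U"
  proof (rule inj_onI)
    fix u1 u2 assume "u1 \<in> U" "u2 \<in> U" "?P u1 = ?P u2"
    with separate[of u1] show "u1 = u2"
      by (metis zero_neq_one)
  qed
  have "?P u0 \<notin> conv_hull (?P ` U - {?P u0})" if "u0 \<in> U" for u0
  proof
    assume "?P u0 \<in> conv_hull (?P ` U - {?P u0})"
    then have hull: "?P u0 \<in> aff_hull (?P ` U - {?P u0})"
      using conv_hull_subset_aff_hull by blast
    obtain a where a: "\<forall>u\<in>U. affine_form (Suc n) a (?P u) = (if u = u0 then 1 else 0)"
      using separate by blast
    then have "affine_form (Suc n) a x = 0" if "x \<in> ?P ` U - {?P u0}" for x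
      using that by auto
    then have "affine_form (Suc n) a (?P u0) = 0"
      using affine_form_aff_hull hull by blast
    with a \<open>u0 \<in> U\<close> show False by simp
  qed
  then show "vertices_of (?P ` U) = ?P ` U"
    unfolding vertices_of_def by auto
qed

lemma integral_affine_interpolation:
  assumes "card U = Suc n" "Rd n \<subseteq> aff_hull (proj (Suc n) ` U)"
    and "Zd n \<subseteq> proj (Suc n) ` (aff_hull U \<inter> Zd (Suc n))"
  obtains a where "\<forall>j<Suc n. a j \<in> \<int>" "\<And>u. u \<in> U \<Longrightarrow> homog u (Suc n) = affine_form (Suc n) a u"
proof -
  obtain a where a: "\<And>u. u \<in> U \<Longrightarrow> homog u (Suc n) = affine_form (Suc n) a u"
    using affine_interpolation[OF assms(1,2), of "\<lambda>u. homog u (Suc n)"] by metis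
  have "affine_form (Suc n) a z \<in> \<int>" if z: "z \<in> Zd n" for z
  proof -
    obtain p where p: "p \<in> aff_hull U" "p \<in> Zd (Suc n)" "z = proj (Suc n) p"
      using assms(3) z by blast
    have "affine_form (Suc n) a z = affine_form (Suc n) a p"
      using p(3) by (simp add: affine_form_proj)
    also have "\<dots> = homog p (Suc n)"
      using affine_relation_aff_hull[OF a p(1)] by simp
    also have "\<dots> \<in> \<int>"
      using p(2) by (simp add: Zd_def homog_def)
    finally show ?thesis .
  qed
  then have "\<forall>j<Suc n. a j \<in> \<int>"
    using affine_form_Ints_on_Zd_imp_coeff less_Suc_eq_le by blast
  with a show ?thesis using that by blast
qed

text \<open>The \<open>m\<close> vertices are completed to \<open>n\<close>; these project injectively onto the vertices of a
  lattice-face \<open>(n - 1)\<close>-polytope, where induction applies for \<open>m < n\<close>, while for \<open>m = n\<close> the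
  hyperplane through them has integer coefficients because its lattice points project onto the
  whole lattice.\<close>

lemma lattice_face_integral_affine_relation:
  assumes "lattice_face n V" "n \<le> card V" "U \<subseteq> V" "card U = m" "1 \<le> m" "m \<le> n"
  shows "\<exists>a. (\<forall>j<m. a j \<in> \<int>) \<and> (\<forall>u\<in>U. homog u m = affine_form m a u)"
  using assms
proof (induction n V arbitrary: U m rule: lattice_face.induct)
  case (1 V)
  then show ?case by simp
next
  case (2 V)
  have "m = 1"
    using "2.prems"(5,6) by simp
  moreover obtain u where "U = {u}"
    using "2.prems"(4) \<open>m = 1\<close> card_1_singletonE by blast
  moreover have "u 1 \<in> \<int>"
    using 2 \<open>U = {u}\<close> by auto
  ultimately show ?case
    by (intro exI[of _ "\<lambda>_. u 1"]) (simp add: affine_form_def homog_def)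
next
  case (3 n V)
  let ?N = "Suc (Suc n)"
  let ?P = "proj ?N"
  have "finite V"
    using lattice_face_polytope[OF "3.prems"(1)] by (simp add: polytope_vertices_def)
  then obtain U' where U': "U \<subseteq> U'" "U' \<subseteq> V" "card U' = ?N"
    using exists_subset_between[of U ?N V] "3.prems"(2-4,6) by auto
  define W where "W = vertices_of (?P ` U')"
  have W: "lattice_face (Suc n) W" "?P ` (aff_hull U' \<inter> Zd ?N) = Zd (Suc n)"
    using "3.prems"(1) U' by (simp_all add: W_def)
  have "W \<subseteq> ?P ` U'"
    by (auto simp: W_def vertices_of_def)
  then have span: "Rd (Suc n) \<subseteq> aff_hull (?P ` U')"
    using lattice_face_polytope[OF W(1)] aff_hull_mono by (metis polytope_vertices_def)
  show ?case
  proof (cases "m = ?N")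
    case True
    then have "U = U'"
      using card_subset_eq[OF finite_subset[OF U'(2) \<open>finite V\<close>] U'(1)] U'(3) "3.prems"(4)
      by simp
    obtain a where "\<forall>j<?N. a j \<in> \<int>" "\<And>u. u \<in> U' \<Longrightarrow> homog u ?N = affine_form ?N a u"
      using integral_affine_interpolation[OF U'(3) span] W(2) by blast
    then show ?thesis
      using True \<open>U = U'\<close> by auto
  next
    case False
    have inj: "inj_on ?P U'" and W_eq: "W = ?P ` U'"
      using proj_inj_on_and_vertices[OF U'(3) span] by (simp_all add: W_def)
    have "m \<le> Suc n"
      using False "3.prems"(6) by simp
    have sub: "?P ` U \<subseteq> W"
      using U'(1) W_eq by auto
    have card: "card (?P ` U) = m"
      using card_image[OF inj_on_subset[OF inj U'(1)]] "3.prems"(4) by simp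
    have card_W: "Suc n \<le> card W"
      using W_eq card_image[OF inj] U'(3) by simp
    have "\<exists>a. (\<forall>j<m. a j \<in> \<int>) \<and> (\<forall>x\<in>?P ` U. homog x m = affine_form m a x)"
      by (rule "3.IH"[of U' "?P ` U" m, folded W_def])
        (use U' W(1) sub card card_W "3.prems"(5) \<open>m \<le> Suc n\<close> in auto)
    then obtain a where a: "\<forall>j<m. a j \<in> \<int>" "\<forall>x\<in>?P ` U. homog x m = affine_form m a x"
      by blast
    have "homog u m = affine_form m a u" if "u \<in> U" for u
    proof -
      have "homog (?P u) m = affine_form m a (?P u)"
        using a(2) that by blast
      then show ?thesis
        using \<open>m \<le> Suc n\<close> by (simp add: homog_proj affine_form_proj)
    qed
    then show ?thesis
      using a(1) by (intro exI[of _ a]) simp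
  qed
qed

lemma lattice_face_simplex_integral_affine_relation:
  assumes "inj_on v {1..d+1}" "lattice_face d (v ` {1..d+1})"
    and "S \<subseteq> {1..d+1}" "card S = m" "1 \<le> m" "m \<le> d"
  obtains a where "\<forall>j<m. a j \<in> \<int>" "\<And>i. i \<in> S \<Longrightarrow> homog (v i) m = affine_form m a (v i)"
proof -
  have "d \<le> card (v ` {1..d+1})"
    using assms(1) by (simp add: card_image)
  moreover have "card (v ` S) = m"
    using assms(1,3,4) by (simp add: card_image inj_on_subset)
  ultimately have "\<exists>a. (\<forall>j<m. a j \<in> \<int>) \<and> (\<forall>u\<in>v ` S. homog u m = affine_form m a u)"
    by (rule lattice_face_integral_affine_relation[OF assms(2) _ image_mono[OF assms(3)] _ assms(5,6)])
  then obtain a where a: "\<forall>j<m. a j \<in> \<int>" "\<forall>u\<in>v ` S. homog u m = affine_form m a u"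
    by blast
  show ?thesis
  proof (rule that)
    show "\<forall>j<m. a j \<in> \<int>" by fact
    show "homog (v i) m = affine_form m a (v i)" if "i \<in> S" for i
      using a(2) that by simp
  qed
qed

section \<open>The ratios of consecutive values of \<open>zval\<close>\<close>

lemma Ymat_eq: "Ymat v \<sigma> k = (\<lambda>r. homog (v (\<sigma> (r + 1))))"
  by (simp add: fun_eq_iff Ymat_def homog_def)

lemma Xmat_eq: "Xmat v d \<sigma> k = (\<lambda>r. homog (if r < k then v (\<sigma> (r + 1)) else v (d + 1)))"
  by (simp add: fun_eq_iff Xmat_def homog_def)

lemma detn_homog_bordered:
  assumes "\<And>r. r < k \<Longrightarrow> homog (p r) k = affine_form k a (p r)"
  shows "detn (Suc k) (\<lambda>r. homog (if r < k then p r else w))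
    = (homog w k - affine_form k a w) * detn k (\<lambda>r. homog (p r))"
proof -
  let ?A = "\<lambda>r. homog (if r < k then p r else w)"
  have "?A r k = (\<Sum>j<k. a j * ?A r j)" if "r < k" for r
    using assms[OF that] that by (simp add: affine_form_def)
  then have "detn (Suc k) ?A = (?A k k - (\<Sum>j<k. a j * ?A k j)) * detn k ?A"
    by (rule detn_Suc_eliminate_last_column)
  also have "?A k k - (\<Sum>j<k. a j * ?A k j) = homog w k - affine_form k a w"
    by (simp add: affine_form_def)
  also have "detn k ?A = detn k (\<lambda>r. homog (p r))"
    by (rule detn_cong) simp
  finally show ?thesis .
qed

lemma zval_eq_0: "detn k (Ymat v \<sigma> k) = 0 \<Longrightarrow> zval v d \<sigma> k = 0"
  by (cases "k = 0") (simp_all add: zval_def)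

text \<open>For \<open>k = 0\<close> both sides are 1, since \<open>homog\<close> makes coordinate 0 equal to 1.\<close>

lemma zval_eq_residual:
  assumes "\<And>r. r < k \<Longrightarrow> homog (v (\<sigma> (r + 1))) k = affine_form k a (v (\<sigma> (r + 1)))"
    and "detn k (Ymat v \<sigma> k) \<noteq> 0"
  shows "zval v d \<sigma> k = homog (v (d + 1)) k - affine_form k a (v (d + 1))"
proof (cases "k = 0")
  case True
  then show ?thesis by (simp add: zval_def homog_def affine_form_def)
next
  case False
  then show ?thesis
    using detn_homog_bordered[OF assms(1), where w = "v (d + 1)"] assms(2)
    by (simp add: zval_def Xmat_eq Ymat_eq)
qed

text \<open>\<open>b - a\<close> vanishes at the points \<open>p r\<close>, and so does \<open>b k - a k\<close> times the residual of \<open>h\<close>;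
  their difference involves only coordinates below \<open>k\<close>, in which the points are affinely
  independent.\<close>

lemma affine_form_diff_eq_residual:
  assumes "detn k (\<lambda>r. homog (p r)) \<noteq> 0"
    and "\<And>r. r < k \<Longrightarrow> affine_form (Suc k) a (p r) = affine_form (Suc k) b (p r)"
    and "\<And>r. r < k \<Longrightarrow> homog (p r) k = affine_form k h (p r)"
  shows "affine_form (Suc k) b w - affine_form (Suc k) a w = (b k - a k) * (homog w k - affine_form k h w)"
proof -
  define e where "e = (\<lambda>j. b j - a j + (b k - a k) * h j)"
  have diff: "affine_form (Suc k) b x - affine_form (Suc k) a x - (b k - a k) * (homog x k - affine_form k h x)
      = affine_form k e x" for x
    unfolding e_def affine_form_add affine_form_diff affine_form_scale affine_form_Suc
    by (simp add: algebra_simps)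
  have "\<forall>r<k. (\<Sum>j<k. homog (p r) j * e j) = 0"
  proof (intro allI impI)
    fix r assume "r < k"
    then show "(\<Sum>j<k. homog (p r) j * e j) = 0"
      using diff[of "p r"] assms(2,3)[OF \<open>r < k\<close>] by (simp add: sum_homog_mult_eq_affine_form)
  qed
  then have "\<forall>j<k. e j = 0"
    using assms(1) detn_eq_0_iff[of k "\<lambda>r. homog (p r)"] by blast
  then have "affine_form k e w = 0"
    by (simp add: affine_form_def)
  then show ?thesis
    using diff[of w] by simp
qed

lemma zval_Suc_eq:
  assumes a: "\<And>i. i \<in> \<sigma> ` {1..Suc k} \<Longrightarrow> homog (v i) (Suc k) = affine_form (Suc k) a (v i)"
    and b: "\<And>i. i \<in> insert (d + 1) (\<sigma> ` {1..k}) \<Longrightarrow> homog (v i) (Suc k) = affine_form (Suc k) b (v i)"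
    and nonsingular: "detn k (Ymat v \<sigma> k) \<noteq> 0" "detn (Suc k) (Ymat v \<sigma> (Suc k)) \<noteq> 0"
  shows "zval v d \<sigma> (Suc k) = (b k - a k) * zval v d \<sigma> k"
proof -
  let ?p = "\<lambda>r. v (\<sigma> (r + 1))" and ?w = "v (d + 1)"
  have a_rows: "homog (?p r) (Suc k) = affine_form (Suc k) a (?p r)" if "r < Suc k" for r
    using that by (intro a imageI) simp
  have b_rows: "homog (?p r) (Suc k) = affine_form (Suc k) b (?p r)" if "r < k" for r
    using that by (intro b insertI2 imageI) simp
  obtain h where "\<And>r. r < k \<Longrightarrow> (\<Sum>j<k. Ymat v \<sigma> k r j * h j) = homog (?p r) k"
    using detn_solvable[OF nonsingular(1), where b = "\<lambda>r. homog (?p r) k"] by blast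
  then have h: "\<And>r. r < k \<Longrightarrow> homog (?p r) k = affine_form k h (?p r)"
    by (simp add: Ymat_eq sum_homog_mult_eq_affine_form)
  have "zval v d \<sigma> (Suc k) = affine_form (Suc k) b ?w - affine_form (Suc k) a ?w"
    using zval_eq_residual[OF a_rows nonsingular(2)] b[of "d + 1"] by simp
  also have "\<dots> = (b k - a k) * (homog ?w k - affine_form k h ?w)"
  proof (rule affine_form_diff_eq_residual)
    show "detn k (\<lambda>r. homog (?p r)) \<noteq> 0"
      using nonsingular(1) by (simp add: Ymat_eq)
    show "affine_form (Suc k) a (?p r) = affine_form (Suc k) b (?p r)" if "r < k" for r
      using a_rows[of r] b_rows[of r] that by simp
  qed (rule h)
  also have "homog ?w k - affine_form k h ?w = zval v d \<sigma> k"
    using zval_eq_residual[OF h nonsingular(1)] by simp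
  finally show ?thesis .
qed

lemma zval_Suc_div_Ints:
  assumes "\<And>i. i \<in> \<sigma> ` {1..Suc k} \<Longrightarrow> homog (v i) (Suc k) = affine_form (Suc k) a (v i)"
    and "\<And>i. i \<in> insert (d + 1) (\<sigma> ` {1..k}) \<Longrightarrow> homog (v i) (Suc k) = affine_form (Suc k) b (v i)"
    and "a k \<in> \<int>" "b k \<in> \<int>"
  shows "zval v d \<sigma> (Suc k) / zval v d \<sigma> k \<in> \<int>"
proof (cases "detn k (Ymat v \<sigma> k) = 0 \<or> detn (Suc k) (Ymat v \<sigma> (Suc k)) = 0")
  case True
  then have "zval v d \<sigma> k = 0 \<or> zval v d \<sigma> (Suc k) = 0"
    using zval_eq_0 by blast
  then show ?thesis
    by auto
next
  case False
  then have "zval v d \<sigma> (Suc k) = (b k - a k) * zval v d \<sigma> k"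
    by (intro zval_Suc_eq[OF assms(1,2)]) simp_all
  moreover have "b k - a k \<in> \<int>"
    using assms(3,4) by simp
  ultimately show ?thesis
    by (cases "zval v d \<sigma> k = 0") auto
qed

theorem mainTheorem10:
  fixes d k :: nat and v :: "nat \<Rightarrow> nat \<Rightarrow> real" and \<sigma> :: "nat \<Rightarrow> nat"
  assumes "1 \<le> d"
    and "inj_on v {1..d+1}"
    and "lattice_face d (v ` {1..d+1})"
    and "\<sigma> permutes {1..d}"
    and "1 \<le> k" and "k \<le> d"
  shows "zval v d \<sigma> k / zval v d \<sigma> (k - 1) \<in> \<int>"
proof -
  obtain k1 where k: "k = Suc k1"
    using assms(5) by (cases k) auto
  have \<sigma>_image: "\<sigma> ` {1..m} \<subseteq> {1..d}" "card (\<sigma> ` {1..m}) = m" if "m \<le> d" for m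
    using that permutes_image[OF assms(4)] card_image[OF permutes_inj_on[OF assms(4)]] by auto
  have "\<sigma> ` {1..k} \<subseteq> {1..d+1}" "card (\<sigma> ` {1..k}) = k"
    using \<sigma>_image[OF assms(6)] by auto
  then obtain a where a: "\<forall>j<k. a j \<in> \<int>" "\<And>i. i \<in> \<sigma> ` {1..k} \<Longrightarrow> homog (v i) k = affine_form k a (v i)"
    using lattice_face_simplex_integral_affine_relation[OF assms(2,3) _ _ assms(5,6)] by blast
  have "d + 1 \<notin> \<sigma> ` {1..k1}"
    using \<sigma>_image(1)[of k1] k assms(6) by auto
  then have "insert (d + 1) (\<sigma> ` {1..k1}) \<subseteq> {1..d+1}" "card (insert (d + 1) (\<sigma> ` {1..k1})) = k"
    using \<sigma>_image[of k1] k assms(6) by auto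
  then obtain b where b: "\<forall>j<k. b j \<in> \<int>"
    "\<And>i. i \<in> insert (d + 1) (\<sigma> ` {1..k1}) \<Longrightarrow> homog (v i) k = affine_form k b (v i)"
    using lattice_face_simplex_integral_affine_relation[OF assms(2,3) _ _ assms(5,6)] by blast
  have "zval v d \<sigma> (Suc k1) / zval v d \<sigma> k1 \<in> \<int>"
    using zval_Suc_div_Ints[OF a(2)[unfolded k] b(2)[unfolded k]] a(1) b(1) unfolding k by simp
  then show ?thesis
    using k by simp
qed

end
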